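(* Let $\Omega\subset\mathbb{R}^d$, $d\in\{1,2,3\}$, be a bounded Lipschitz domain and $C\in H^1(\Omega)$. For every $\lambda\ge0$ the functional $\bar b_\lambda$ is strictly convex.
   Context: $\|\cdot\|_q$ denotes the $L^q(\Omega)$ norm. Write $C^+=\max\{C,0\}$, $C^-=\min\{C,0\}$, fix $\delta>0$ and set $N=\delta^2+\int_\Omega C^+dx$, $P=\delta^2-\int_\Omega C^-dx$. Let $\mathcal P=\{v\in L^1(\Omega):\int_\Omega v\,dx=0\}$, $b(v)=N\ln\big(\tfrac1{|\Omega|}\int_\Omega e^{-v}dx\big)+P\ln\big(\tfrac1{|\Omega|}\int_\Omega e^{v}dx\big)+\int_\Omega Cv\,dx$, $\Sigma=\{v\in\mathcal P: b(v)<+\infty,\ \nabla v\in L^2(\Omega)\}$. For $\lambda\ge0$, $\bar b_\lambda:L^1(\Omega)\to\mathbb{R}\cup\{+\infty\}$ is $\bar b_\lambda(v)=\lambda^2\|\nabla v\|_2^2+b(v)$ if $v\in\Sigma$ and $+\infty$ otherwise. *)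

theory Defs
  imports "HOL-Analysis.Analysis"
begin

text \<open>Coordinate-free: a unit direction e, and a Lipschitz function gamma on the
hyperplane orthogonal to e (the variable y - (y.e) e ranges over that hyperplane).\<close>

definition lipschitz_domain :: "(real ^ 'n) set \<Rightarrow> bool" where
  "lipschitz_domain \<Omega> \<longleftrightarrow>
     \<Omega> \<noteq> {} \<and> open \<Omega> \<and> connected \<Omega> \<and> bounded \<Omega> \<and>
     (\<forall>x \<in> frontier \<Omega>. \<exists>r > 0. \<exists>e :: real ^ 'n. \<exists>\<gamma> :: real ^ 'n \<Rightarrow> real. \<exists>L.
        norm e = 1 \<and> L-lipschitz_on {z. z \<bullet> e = 0} \<gamma> \<and>
        \<Omega> \<inter> ball x r = {y \<in> ball x r. y \<bullet> e > \<gamma> (y - (y \<bullet> e) *\<^sub>R e)})"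

definition partial_deriv :: "(real ^ 'n \<Rightarrow> real) \<Rightarrow> 'n \<Rightarrow> real ^ 'n \<Rightarrow> real" where
  "partial_deriv f i x = frechet_derivative f (at x) (axis i 1)"

text \<open>C-infinity functions on the whole space: differentiable, with all partial
derivatives again C-infinity (greatest fixed point, i.e. derivatives of all orders).\<close>

coinductive smooth_fun :: "(real ^ 'n \<Rightarrow> real) \<Rightarrow> bool" where
  "\<lbrakk> f differentiable_on UNIV; \<And>i. smooth_fun (partial_deriv f i) \<rbrakk> \<Longrightarrow> smooth_fun f"

definition test_function :: "(real ^ 'n) set \<Rightarrow> (real ^ 'n \<Rightarrow> real) \<Rightarrow> bool" where
  "test_function \<Omega> \<phi> \<longleftrightarrow> smooth_fun \<phi> \<and> compact (closure {x. \<phi> x \<noteq> 0})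
      \<and> closure {x. \<phi> x \<noteq> 0} \<subseteq> \<Omega>"

definition locally_integrable_on :: "(real ^ 'n) set \<Rightarrow> (real ^ 'n \<Rightarrow> real) \<Rightarrow> bool" where
  "locally_integrable_on \<Omega> f \<longleftrightarrow> (\<forall>K. compact K \<and> K \<subseteq> \<Omega> \<longrightarrow> integrable (lebesgue_on K) f)"

definition weak_gradient :: "(real ^ 'n) set \<Rightarrow> (real ^ 'n \<Rightarrow> real) \<Rightarrow> (real ^ 'n \<Rightarrow> real ^ 'n) \<Rightarrow> bool" where
  "weak_gradient \<Omega> v g \<longleftrightarrow> locally_integrable_on \<Omega> v \<and>
     (\<forall>i. locally_integrable_on \<Omega> (\<lambda>x. g x $ i)) \<and>
     (\<forall>\<phi> i. test_function \<Omega> \<phi> \<longrightarrow>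
        (\<integral>x. v x * partial_deriv \<phi> i x \<partial>lebesgue_on \<Omega>) = - (\<integral>x. g x $ i * \<phi> x \<partial>lebesgue_on \<Omega>))"

definition in_L1 :: "(real ^ 'n) set \<Rightarrow> (real ^ 'n \<Rightarrow> real) \<Rightarrow> bool" where
  "in_L1 \<Omega> f \<longleftrightarrow> integrable (lebesgue_on \<Omega>) f"

definition in_L2 :: "(real ^ 'n) set \<Rightarrow> (real ^ 'n \<Rightarrow> real) \<Rightarrow> bool" where
  "in_L2 \<Omega> f \<longleftrightarrow> f \<in> borel_measurable (lebesgue_on \<Omega>) \<and> integrable (lebesgue_on \<Omega>) (\<lambda>x. (f x)\<^sup>2)"

definition grad_in_L2 :: "(real ^ 'n) set \<Rightarrow> (real ^ 'n \<Rightarrow> real) \<Rightarrow> bool" where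
  "grad_in_L2 \<Omega> v \<longleftrightarrow> (\<exists>g. weak_gradient \<Omega> v g \<and> g \<in> borel_measurable (lebesgue_on \<Omega>)
      \<and> integrable (lebesgue_on \<Omega>) (\<lambda>x. (norm (g x))\<^sup>2))"

text \<open>Squared L^2 norm of the weak gradient (weak gradients are unique a.e.).\<close>
definition grad_norm2_sq :: "(real ^ 'n) set \<Rightarrow> (real ^ 'n \<Rightarrow> real) \<Rightarrow> real" where
  "grad_norm2_sq \<Omega> v = (\<integral>x. (norm ((SOME g. weak_gradient \<Omega> v g \<and> g \<in> borel_measurable (lebesgue_on \<Omega>)
      \<and> integrable (lebesgue_on \<Omega>) (\<lambda>x. (norm (g x))\<^sup>2)) x))\<^sup>2 \<partial>lebesgue_on \<Omega>)"

definition in_H1 :: "(real ^ 'n) set \<Rightarrow> (real ^ 'n \<Rightarrow> real) \<Rightarrow> bool" where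
  "in_H1 \<Omega> f \<longleftrightarrow> in_L2 \<Omega> f \<and> grad_in_L2 \<Omega> f"

definition Nconst :: "(real ^ 'n) set \<Rightarrow> (real ^ 'n \<Rightarrow> real) \<Rightarrow> real \<Rightarrow> real" where
  "Nconst \<Omega> C \<delta> = \<delta>\<^sup>2 + (\<integral>x. max (C x) 0 \<partial>lebesgue_on \<Omega>)"

definition Pconst :: "(real ^ 'n) set \<Rightarrow> (real ^ 'n \<Rightarrow> real) \<Rightarrow> real \<Rightarrow> real" where
  "Pconst \<Omega> C \<delta> = \<delta>\<^sup>2 - (\<integral>x. min (C x) 0 \<partial>lebesgue_on \<Omega>)"

text \<open>b(v), with value +infinity when one of the integrals in its definition is infinite
(ln of an infinite integral of exp(+-v)) or undefined.\<close>
definition bfun :: "(real ^ 'n) set \<Rightarrow> (real ^ 'n \<Rightarrow> real) \<Rightarrow> real \<Rightarrow> (real ^ 'n \<Rightarrow> real) \<Rightarrow> ereal" where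
  "bfun \<Omega> C \<delta> v =
     (if integrable (lebesgue_on \<Omega>) (\<lambda>x. exp (- v x)) \<and> integrable (lebesgue_on \<Omega>) (\<lambda>x. exp (v x))
         \<and> integrable (lebesgue_on \<Omega>) (\<lambda>x. C x * v x)
      then ereal (Nconst \<Omega> C \<delta> * ln ((\<integral>x. exp (- v x) \<partial>lebesgue_on \<Omega>) / measure lebesgue \<Omega>)
                + Pconst \<Omega> C \<delta> * ln ((\<integral>x. exp (v x) \<partial>lebesgue_on \<Omega>) / measure lebesgue \<Omega>)
                + (\<integral>x. C x * v x \<partial>lebesgue_on \<Omega>))
      else \<infinity>)"

definition Sigma_set :: "(real ^ 'n) set \<Rightarrow> (real ^ 'n \<Rightarrow> real) \<Rightarrow> real \<Rightarrow> (real ^ 'n \<Rightarrow> real) set" where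
  "Sigma_set \<Omega> C \<delta> = {v. in_L1 \<Omega> v \<and> (\<integral>x. v x \<partial>lebesgue_on \<Omega>) = 0
       \<and> bfun \<Omega> C \<delta> v < \<infinity> \<and> grad_in_L2 \<Omega> v}"

definition bbar :: "(real ^ 'n) set \<Rightarrow> (real ^ 'n \<Rightarrow> real) \<Rightarrow> real \<Rightarrow> real \<Rightarrow> (real ^ 'n \<Rightarrow> real) \<Rightarrow> ereal" where
  "bbar \<Omega> C \<delta> lam v =
     (if v \<in> Sigma_set \<Omega> C \<delta> then ereal (lam\<^sup>2 * grad_norm2_sq \<Omega> v) + bfun \<Omega> C \<delta> v else \<infinity>)"

text \<open>Elements of L^1 are represented by integrable functions; two representatives are the
same element iff they agree a.e. on Omega.\<close>
definition strictly_convex_L1 :: "(real ^ 'n) set \<Rightarrow> ((real ^ 'n \<Rightarrow> real) \<Rightarrow> ereal) \<Rightarrow> bool" where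
  "strictly_convex_L1 \<Omega> F \<longleftrightarrow>
     (\<forall>u v t. in_L1 \<Omega> u \<and> in_L1 \<Omega> v \<and> 0 < t \<and> t < 1 \<longrightarrow>
        F (\<lambda>x. t * u x + (1 - t) * v x) \<le> ereal t * F u + ereal (1 - t) * F v) \<and>
     (\<forall>u v t. in_L1 \<Omega> u \<and> in_L1 \<Omega> v \<and> 0 < t \<and> t < 1 \<and>
        \<not> (AE x in lebesgue_on \<Omega>. u x = v x) \<and> F u < \<infinity> \<and> F v < \<infinity> \<longrightarrow>
        F (\<lambda>x. t * u x + (1 - t) * v x) < ereal t * F u + ereal (1 - t) * F v)"

end

theory Submission
  imports Defs "HOL-Computational_Algebra.Polynomial"
begin

text \<open>
  Write \<open>L v = ln (mean of exp v over \<Omega>)\<close>, so that \<open>b v = N L (-v) + P L v + \<integral> C v\<close>.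
  Comparing \<open>exp (t u + (1 - t) v)\<close> pointwise, by convexity of \<open>exp\<close>, with the normalised
  combination \<open>t exp u / \<integral> exp u + (1 - t) exp v / \<integral> exp v\<close> shows that \<open>L\<close> is convex, and strictly
  so unless \<open>u - v\<close> is a.e. constant; for two functions of mean zero that constant is \<open>0\<close>. As
  \<open>N \<ge> 0\<close> and \<open>P \<ge> \<delta>\<^sup>2 > 0\<close>, \<open>b\<close> is strictly convex on \<open>\<Sigma>\<close>, and the gradient term is convex because
  weak gradients are linear in \<open>v\<close>. Since the gradient norm is computed from a chosen weak gradient,
  this needs weak gradients to be unique a.e.: the fundamental lemma of the calculus of
  variations, proved by testing against the smooth functions \<open>1 - (1 - \<psi>)\<^sup>k\<close>, with \<open>\<psi>\<close> a product
  of functions \<open>exp (-1/x)\<close> positive exactly on a box, which converge to the indicator of the box,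
  and then applying Lebesgue's differentiation theorem.
\<close>

section \<open>Smooth bump functions\<close>

definition expinv :: "real poly \<Rightarrow> real \<Rightarrow> real" where
  "expinv p x = (if x > 0 then poly p (1/x) * exp (-1/x) else 0)"

text \<open>The derivative of \<open>p (1/x) exp (-1/x)\<close> is \<open>(p (1/x) - p' (1/x)) exp (-1/x) / x\<^sup>2\<close>.\<close>
definition expinv_deriv_poly :: "real poly \<Rightarrow> real poly" where
  "expinv_deriv_poly p = [:0,0,1:] * (p - pderiv p)"

lemma tendsto_poly_times_exp_neg_at_top:
  "((\<lambda>y. poly (q::real poly) y * exp (- y)) \<longlongrightarrow> 0) at_top"
proof -
  have "((\<lambda>y. \<Sum>i\<le>degree q. coeff q i * (y ^ i / exp y)) \<longlongrightarrow> (\<Sum>i\<le>degree q. coeff q i * 0)) at_top"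
    by (intro tendsto_sum tendsto_mult tendsto_const tendsto_power_div_exp_0)
  moreover have "(\<Sum>i\<le>degree q. coeff q i * (y ^ i / exp y)) = poly q y * exp (- y)" for y
    by (simp add: poly_altdef exp_minus divide_inverse sum_distrib_right mult.assoc)
  ultimately show ?thesis by simp
qed

lemma has_real_derivative_expinv:
  "(expinv p has_real_derivative expinv (expinv_deriv_poly p) x) (at x)"
proof -
  consider "x > 0" | "x < 0" | "x = 0" by linarith
  then show ?thesis
  proof cases
    case 1
    have "((\<lambda>y. poly p (1/y) * exp (-1/y)) has_real_derivative
       poly (pderiv p) (1/x) * (- 1 / x^2) * exp (-1/x) + poly p (1/x) * (exp (-1/x) * (1/x^2))) (at x)"
      using 1
      by (auto intro!: derivative_eq_intros DERIV_chain2[where f="poly p"] simp: power2_eq_square field_simps)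
    moreover have "poly (pderiv p) (1/x) * (- 1 / x^2) * exp (-1/x) + poly p (1/x) * (exp (-1/x) * (1/x^2))
        = expinv (expinv_deriv_poly p) x"
      using 1 by (simp add: expinv_def expinv_deriv_poly_def power2_eq_square field_simps)
    ultimately have "((\<lambda>y. poly p (1/y) * exp (-1/y)) has_real_derivative expinv (expinv_deriv_poly p) x) (at x)"
      by simp
    then show ?thesis
      by (rule has_field_derivative_transform_within_open[where S="{0<..}"]) (use 1 in \<open>auto simp: expinv_def\<close>)
  next
    case 2
    have "((\<lambda>y. 0) has_real_derivative expinv (expinv_deriv_poly p) x) (at x)"
      using 2 by (simp add: expinv_def)
    then show ?thesis
      by (rule has_field_derivative_transform_within_open[where S="{..<0}"]) (use 2 in \<open>auto simp: expinv_def\<close>)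
  next
    case 3
    have "((\<lambda>y. poly ([:0,1:] * p) y * exp (- y)) \<longlongrightarrow> 0) at_top"
      by (rule tendsto_poly_times_exp_neg_at_top)
    then have "((\<lambda>h. poly ([:0,1:] * p) (inverse h) * exp (- inverse h)) \<longlongrightarrow> 0) (at_right 0)"
      by (subst (asm) filterlim_at_top_to_right) simp
    then have right: "((\<lambda>h. (expinv p (0 + h) - expinv p 0) / h) \<longlongrightarrow> 0) (at_right 0)"
      by (rule Lim_transform_eventually)
        (auto intro: eventually_mono[OF eventually_at_right_less[of 0]] simp: expinv_def divide_inverse)
    have left: "((\<lambda>h. (expinv p (0 + h) - expinv p 0) / h) \<longlongrightarrow> 0) (at_left 0)"
      by (rule Lim_transform_eventually[where f="\<lambda>_. 0"])
        (auto intro: eventually_mono[OF eventually_at_left_real[of "-1" 0]] simp: expinv_def)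
    have "((\<lambda>h. (expinv p (0 + h) - expinv p 0) / h) \<longlongrightarrow> 0) (at 0)"
      using right left by (simp add: filterlim_split_at_real)
    then show ?thesis using 3 by (simp add: DERIV_def expinv_def)
  qed
qed

text \<open>The algebra generated by the ridge functions \<open>x \<mapsto> expinv p (a x\<^sub>i + b)\<close> is closed under
  partial differentiation, which is how its members are seen to be \<open>C\<^sup>\<infinity>\<close>.\<close>
inductive expinv_algebra :: "(real^'n \<Rightarrow> real) \<Rightarrow> bool" where
  base: "expinv_algebra (\<lambda>x. expinv p (a * x$i + b))"
| const: "expinv_algebra (\<lambda>x. c)"
| add: "expinv_algebra f \<Longrightarrow> expinv_algebra g \<Longrightarrow> expinv_algebra (\<lambda>x. f x + g x)"
| mult: "expinv_algebra f \<Longrightarrow> expinv_algebra g \<Longrightarrow> expinv_algebra (\<lambda>x. f x * g x)"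

lemma expinv_algebra_has_derivative:
  assumes "expinv_algebra f"
  shows "\<exists>D. (\<forall>x. (f has_derivative D x) (at x)) \<and> (\<forall>j. expinv_algebra (\<lambda>x. D x (axis j 1)))"
  using assms
proof induction
  case (base p a i b)
  define D where "D = (\<lambda>x h. expinv (expinv_deriv_poly p) (a * x$i + b) * (a * h$i))"
  have "((\<lambda>x. expinv p (a * x$i + b)) has_derivative D x) (at x)" for x
  proof -
    have "((\<lambda>x. a * x$i + b) has_derivative (\<lambda>h. a * h$i)) (at x)"
      by (auto intro!: derivative_eq_intros bounded_linear.has_derivative[OF bounded_linear_vec_nth])
    moreover have "(expinv p has_derivative (\<lambda>s. expinv (expinv_deriv_poly p) (a * x$i + b) * s)) (at (a * x$i + b))"
      using has_real_derivative_expinv by (simp add: has_field_derivative_def)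
    ultimately show ?thesis by (auto dest: has_derivative_compose simp: D_def o_def)
  qed
  moreover have "expinv_algebra (\<lambda>x. D x (axis j 1))" for j
    by (cases "j = i") (auto simp: D_def axis_def intro: expinv_algebra.intros)
  ultimately show ?case by blast
next
  case (const c)
  show ?case by (rule exI[of _ "\<lambda>x h. 0"]) (auto intro: expinv_algebra.const)
next
  case (add f g)
  then obtain D1 D2 where "\<forall>x. (f has_derivative D1 x) (at x)" "\<forall>j. expinv_algebra (\<lambda>x. D1 x (axis j 1))"
    "\<forall>x. (g has_derivative D2 x) (at x)" "\<forall>j. expinv_algebra (\<lambda>x. D2 x (axis j 1))" by blast
  then show ?case
    by (intro exI[of _ "\<lambda>x h. D1 x h + D2 x h"]) (auto intro: expinv_algebra.add has_derivative_add)
next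
  case (mult f g)
  then obtain D1 D2 where "\<forall>x. (f has_derivative D1 x) (at x)" "\<forall>j. expinv_algebra (\<lambda>x. D1 x (axis j 1))"
    "\<forall>x. (g has_derivative D2 x) (at x)" "\<forall>j. expinv_algebra (\<lambda>x. D2 x (axis j 1))" by blast
  with mult.hyps show ?case
    by (intro exI[of _ "\<lambda>x h. f x * D2 x h + D1 x h * g x"])
      (auto intro!: expinv_algebra.add expinv_algebra.mult has_derivative_mult)
qed

lemma expinv_algebra_smooth: "expinv_algebra f \<Longrightarrow> smooth_fun f"
proof (coinduction arbitrary: f rule: smooth_fun.coinduct)
  case (smooth_fun f)
  from expinv_algebra_has_derivative[OF smooth_fun] obtain D where
    D: "\<forall>x. (f has_derivative D x) (at x)" "\<forall>j. expinv_algebra (\<lambda>x. D x (axis j 1))" by blast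
  have "partial_deriv f j x = D x (axis j 1)" for j x
    using frechet_derivative_at[OF D(1)[rule_format, of x]] by (simp add: partial_deriv_def)
  then have "partial_deriv f j = (\<lambda>x. D x (axis j 1))" for j by blast
  moreover have "f differentiable_on UNIV"
    using D(1) by (auto simp: differentiable_on_def differentiable_def)
  ultimately show ?case using D(2) by auto
qed

lemma expinv_algebra_continuous: "expinv_algebra f \<Longrightarrow> continuous_on UNIV f"
  by (meson expinv_algebra_has_derivative differentiable_def differentiable_imp_continuous_on
      differentiable_on_def)

lemma expinv_algebra_prod:
  "finite S \<Longrightarrow> (\<And>i. i \<in> S \<Longrightarrow> expinv_algebra (f i)) \<Longrightarrow> expinv_algebra (\<lambda>x. \<Prod>i\<in>S. f i x)"
  by (induction S rule: finite_induct) (auto intro: expinv_algebra.const expinv_algebra.mult)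

lemma expinv_algebra_power: "expinv_algebra f \<Longrightarrow> expinv_algebra (\<lambda>x. f x ^ k)"
  by (induction k) (auto intro: expinv_algebra.const expinv_algebra.mult)

lemma expinv_algebra_diff:
  assumes "expinv_algebra f" "expinv_algebra g"
  shows "expinv_algebra (\<lambda>x. f x - g x)"
  using expinv_algebra.add[OF assms(1) expinv_algebra.mult[OF expinv_algebra.const[of "-1"] assms(2)]]
  by simp

lemma expinv_one_bounds: "0 \<le> expinv 1 y" "expinv 1 y \<le> 1"
  by (auto simp: expinv_def)

lemma expinv_one_eq_0_iff: "expinv 1 y = 0 \<longleftrightarrow> y \<le> 0"
  by (auto simp: expinv_def)

definition box_bump :: "real^'n \<Rightarrow> real^'n \<Rightarrow> real^'n \<Rightarrow> real" where
  "box_bump c d x = (\<Prod>i\<in>UNIV. expinv 1 (x$i - c$i) * expinv 1 (d$i - x$i))"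

definition box_bump_approx :: "real^'n \<Rightarrow> real^'n \<Rightarrow> nat \<Rightarrow> real^'n \<Rightarrow> real" where
  "box_bump_approx c d k x = 1 - (1 - box_bump c d x) ^ k"

lemma expinv_algebra_box_bump: "expinv_algebra (box_bump c d)"
proof -
  have "expinv_algebra (\<lambda>x. expinv 1 (x$i - c$i))" "expinv_algebra (\<lambda>x. expinv 1 (d$i - x$i))" for i
    using expinv_algebra.base[of 1 1 i "- c$i"] expinv_algebra.base[of 1 "-1" i "d$i"] by simp_all
  then show ?thesis
    unfolding box_bump_def by (intro expinv_algebra_prod expinv_algebra.mult) auto
qed

lemma expinv_algebra_box_bump_approx: "expinv_algebra (box_bump_approx c d k)"
  unfolding box_bump_approx_def
  by (intro expinv_algebra_diff expinv_algebra.const expinv_algebra_power expinv_algebra_box_bump)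

lemma box_bump_bounds: "0 \<le> box_bump c d x" "box_bump c d x \<le> 1"
  unfolding box_bump_def
  by (auto intro!: prod_nonneg prod_le_1 mult_nonneg_nonneg mult_le_one simp: expinv_one_bounds)

lemma box_bump_eq_0_iff: "box_bump c d x = 0 \<longleftrightarrow> x \<notin> box c d"
  by (auto simp: box_bump_def expinv_one_eq_0_iff mem_box_cart not_less)

lemma box_bump_approx_bounds: "0 \<le> box_bump_approx c d k x" "box_bump_approx c d k x \<le> 1"
  using box_bump_bounds[of c d x] by (auto simp: box_bump_approx_def power_le_one)

lemma box_bump_approx_eq_0: "x \<notin> box c d \<Longrightarrow> box_bump_approx c d k x = 0"
  using box_bump_eq_0_iff[of c d x] by (simp add: box_bump_approx_def)

lemma LIMSEQ_box_bump_approx: "(\<lambda>k. box_bump_approx c d k x) \<longlonglongrightarrow> indicator (box c d) x"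
proof (cases "x \<in> box c d")
  case True
  then have "0 < box_bump c d x"
    using box_bump_eq_0_iff[of c d x] box_bump_bounds(1)[of c d x] by linarith
  then have "(\<lambda>k. (1 - box_bump c d x) ^ k) \<longlonglongrightarrow> 0"
    using box_bump_bounds(2)[of c d x] by (intro LIMSEQ_power_zero) auto
  then have "(\<lambda>k. 1 - (1 - box_bump c d x) ^ k) \<longlonglongrightarrow> 1 - 0"
    by (intro tendsto_diff tendsto_const)
  then show ?thesis using True by (simp add: box_bump_approx_def)
qed (simp add: box_bump_approx_eq_0)

lemma test_function_box_bump_approx:
  assumes "cbox c d \<subseteq> \<Omega>"
  shows "test_function \<Omega> (box_bump_approx c d k)"
proof -
  have sub: "closure {x. box_bump_approx c d k x \<noteq> 0} \<subseteq> cbox c d"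
    by (rule closure_minimal) (use box_bump_approx_eq_0[of _ c d k] box_subset_cbox[of c d] in auto)
  then have "compact (closure {x. box_bump_approx c d k x \<noteq> 0})"
    by (metis compact_Int_closed[OF compact_cbox closed_closure] inf.absorb2)
  with sub assms show ?thesis
    by (auto simp: test_function_def intro: expinv_algebra_smooth expinv_algebra_box_bump_approx)
qed

lemma smooth_fun_differentiable: "smooth_fun f \<Longrightarrow> f differentiable_on UNIV"
  by (erule smooth_fun.cases) simp

lemma smooth_fun_partial_deriv: "smooth_fun f \<Longrightarrow> smooth_fun (partial_deriv f i)"
  by (erule smooth_fun.cases) simp

lemma smooth_fun_continuous: "smooth_fun f \<Longrightarrow> continuous_on UNIV f"
  using smooth_fun_differentiable differentiable_imp_continuous_on by blast

lemma continuous_vanishing_off_compact_bounded: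
  fixes f :: "'a::topological_space \<Rightarrow> real"
  assumes "continuous_on UNIV f" "compact K" "\<And>x. x \<notin> K \<Longrightarrow> f x = 0"
  shows "\<exists>B. \<forall>x. \<bar>f x\<bar> \<le> B"
proof -
  have "bounded (f ` K)"
    by (rule compact_imp_bounded, rule compact_continuous_image)
      (use continuous_on_subset[OF assms(1)] assms(2) in auto)
  then obtain B where "\<And>x. x \<in> K \<Longrightarrow> \<bar>f x\<bar> \<le> B"
    unfolding bounded_iff by auto
  then have "\<bar>f x\<bar> \<le> max B 0" for x
    using assms(3)[of x] by (cases "x \<in> K") force+
  then show ?thesis by blast
qed

lemma eq_0_outside_closure_support:
  assumes "x \<notin> closure {x. \<phi> x \<noteq> 0}"
  shows "\<phi> x = 0" "partial_deriv \<phi> i x = 0"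
proof -
  let ?K = "closure {x. \<phi> x \<noteq> 0}"
  show "\<phi> x = 0" using assms closure_subset[of "{x. \<phi> x \<noteq> 0}"] by auto
  have "(\<phi> has_derivative (\<lambda>h. 0)) (at x)"
  proof (rule has_derivative_transform_within_open[OF has_derivative_const[of 0]])
    show "\<And>y. y \<in> - ?K \<Longrightarrow> 0 = \<phi> y" using closure_subset[of "{x. \<phi> x \<noteq> 0}"] by auto
  qed (use assms in auto)
  then show "partial_deriv \<phi> i x = 0"
    by (simp add: partial_deriv_def frechet_derivative_at[symmetric])
qed

lemma
  assumes "test_function \<Omega> \<phi>"
  shows test_function_continuous: "continuous_on UNIV \<phi>"
    and test_function_partial_deriv_continuous: "continuous_on UNIV (partial_deriv \<phi> i)"
    and test_function_bounded: "\<exists>B. \<forall>x. \<bar>\<phi> x\<bar> \<le> B"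
    and test_function_partial_deriv_bounded: "\<exists>B. \<forall>x. \<bar>partial_deriv \<phi> i x\<bar> \<le> B"
proof -
  have smooth: "smooth_fun \<phi>" and compact: "compact (closure {x. \<phi> x \<noteq> 0})"
    using assms by (auto simp: test_function_def)
  show cont: "continuous_on UNIV \<phi>"
    by (simp add: smooth smooth_fun_continuous)
  show cont': "continuous_on UNIV (partial_deriv \<phi> i)"
    by (simp add: smooth smooth_fun_continuous smooth_fun_partial_deriv)
  show "\<exists>B. \<forall>x. \<bar>\<phi> x\<bar> \<le> B"
    by (rule continuous_vanishing_off_compact_bounded[OF cont compact eq_0_outside_closure_support(1)[of _ \<phi>]])
  show "\<exists>B. \<forall>x. \<bar>partial_deriv \<phi> i x\<bar> \<le> B"
    by (rule continuous_vanishing_off_compact_bounded[OF cont' compact eq_0_outside_closure_support(2)[of _ \<phi>]])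
qed

lemma integrable_mult_bounded:
  fixes f g :: "'a \<Rightarrow> real"
  assumes "integrable M f" "g \<in> borel_measurable M" "\<And>x. \<bar>g x\<bar> \<le> B"
  shows "integrable M (\<lambda>x. f x * g x)"
proof (rule Bochner_Integration.integrable_bound[where f="\<lambda>x. B * f x"])
  show "integrable M (\<lambda>x. B * f x)" using assms(1) by simp
  show "(\<lambda>x. f x * g x) \<in> borel_measurable M"
    using borel_measurable_integrable[OF assms(1)] assms(2) by (rule borel_measurable_times)
  have "\<bar>f x * g x\<bar> \<le> \<bar>B * f x\<bar>" for x
  proof -
    have "\<bar>f x * g x\<bar> \<le> \<bar>f x\<bar> * B" by (simp add: abs_mult mult_left_mono assms(3))
    also have "\<dots> = \<bar>B * f x\<bar>" using assms(3)[of x] by (simp add: abs_mult)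
    finally show ?thesis .
  qed
  then show "AE x in M. norm (f x * g x) \<le> norm (B * f x)" by simp
qed

lemma
  assumes "test_function \<Omega> \<phi>" "open \<Omega>" "integrable (lebesgue_on \<Omega>) f"
  shows integrable_mult_test_function: "integrable (lebesgue_on \<Omega>) (\<lambda>x. f x * \<phi> x)"
    and integrable_mult_test_function_partial_deriv:
      "integrable (lebesgue_on \<Omega>) (\<lambda>x. f x * partial_deriv \<phi> i x)"
proof -
  have "\<Omega> \<in> sets lebesgue" using assms(2) by (simp add: borel_open)
  then have meas: "g \<in> borel_measurable (lebesgue_on \<Omega>)" if "continuous_on UNIV g" for g :: "_ \<Rightarrow> real"
    by (intro continuous_imp_measurable_on_sets_lebesgue continuous_on_subset[OF that]) simp_all
  obtain B where "\<forall>x. \<bar>\<phi> x\<bar> \<le> B" using test_function_bounded[OF assms(1)] by blast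
  then show "integrable (lebesgue_on \<Omega>) (\<lambda>x. f x * \<phi> x)"
    using integrable_mult_bounded[OF assms(3) meas[OF test_function_continuous[OF assms(1)]]] by blast
  obtain B' where "\<forall>x. \<bar>partial_deriv \<phi> i x\<bar> \<le> B'"
    using test_function_partial_deriv_bounded[OF assms(1)] by blast
  then show "integrable (lebesgue_on \<Omega>) (\<lambda>x. f x * partial_deriv \<phi> i x)"
    using integrable_mult_bounded[OF assms(3) meas[OF test_function_partial_deriv_continuous[OF assms(1)]]]
    by blast
qed

section \<open>The fundamental lemma of the calculus of variations\<close>

lemma cart_One_eq_1: "(One :: real^'n) = 1"
proof (rule iffD2[OF vec_eq_iff], rule allI)
  fix i :: 'n
  have "axis i (1::real) \<in> Basis" by simp
  then have "(One :: real^'n) $ i = 1"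
    using inner_sum_Basis[of "axis i (1::real)"] by (simp add: cart_eq_inner_axis)
  then show "One $ i = (1 :: real^'n) $ i" by simp
qed

lemma cube_subset_ball:
  fixes x :: "real^'n"
  assumes "\<eta> * real CARD('n) < r"
  shows "cbox x (x + \<eta> *\<^sub>R One) \<subseteq> ball x r"
proof
  fix y assume "y \<in> cbox x (x + \<eta> *\<^sub>R One)"
  then have "x$i \<le> y$i \<and> y$i \<le> x$i + \<eta>" for i by (simp add: mem_box_cart cart_One_eq_1)
  then have "\<bar>(y - x)$i\<bar> \<le> \<eta>" for i by (smt (verit) vector_minus_component)
  then have "norm (y - x) \<le> \<eta> * real CARD('n)"
    using norm_le_l1_cart[of "y - x"] sum_mono[of UNIV "\<lambda>i. \<bar>(y - x)$i\<bar>" "\<lambda>_. \<eta>"] by (simp add: mult.commute)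
  with assms show "y \<in> ball x r" by (simp add: dist_norm norm_minus_commute)
qed

lemma integral_lebesgue_on_mult_indicator_box:
  fixes h :: "real^'n \<Rightarrow> real"
  assumes \<Omega>: "\<Omega> \<in> sets lebesgue" and h: "integrable (lebesgue_on \<Omega>) h" and sub: "box c d \<subseteq> \<Omega>"
  shows "(\<integral>x. h x * indicator (box c d) x \<partial>lebesgue_on \<Omega>) = integral (cbox c d) h"
proof -
  have "set_integrable lebesgue \<Omega> h"
    using h \<Omega> by (simp add: integrable_restrict_space set_integrable_def)
  then have box_integrable: "set_integrable lebesgue (box c d) h"
    by (rule set_integrable_subset) (use sub in simp_all)
  have "(\<integral>x. h x * indicator (box c d) x \<partial>lebesgue_on \<Omega>)
      = integral\<^sup>L lebesgue (\<lambda>x. indicator \<Omega> x *\<^sub>R (h x * indicator (box c d) x))"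
    using \<Omega> by (simp add: integral_restrict_space)
  also have "\<dots> = integral\<^sup>L lebesgue (\<lambda>x. indicator (box c d) x *\<^sub>R h x)"
    using sub by (intro Bochner_Integration.integral_cong) (auto simp: indicator_def)
  also have "\<dots> = integral (box c d) h"
    using set_lebesgue_integral_eq_integral(2)[OF box_integrable] by (simp add: set_lebesgue_integral_def)
  also have "\<dots> = integral (cbox c d) h" by (rule integral_open_interval)
  finally show ?thesis .
qed

lemma integral_cbox_eq_0_if_orthogonal_to_tests:
  fixes h :: "real^'n \<Rightarrow> real"
  assumes \<Omega>: "open \<Omega>" and h: "integrable (lebesgue_on \<Omega>) h"
    and orth: "\<And>\<phi>. test_function \<Omega> \<phi> \<Longrightarrow> (\<integral>x. h x * \<phi> x \<partial>lebesgue_on \<Omega>) = 0"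
    and sub: "cbox c d \<subseteq> \<Omega>"
  shows "integral (cbox c d) h = 0"
proof -
  let ?M = "lebesgue_on \<Omega>" and ?\<phi> = "box_bump_approx c d"
  have \<Omega>_sets: "\<Omega> \<in> sets lebesgue" using \<Omega> by (simp add: borel_open)
  have "?\<phi> k \<in> borel_measurable ?M" for k
    by (intro continuous_imp_measurable_on_sets_lebesgue[OF _ \<Omega>_sets] continuous_on_subset[OF
          expinv_algebra_continuous[OF expinv_algebra_box_bump_approx]]) simp
  then have meas: "(\<lambda>x. h x * ?\<phi> k x) \<in> borel_measurable ?M" for k
    using h by measurable
  have lim: "(\<lambda>k. h x * ?\<phi> k x) \<longlonglongrightarrow> h x * indicator (box c d) x" for x
    by (intro tendsto_mult tendsto_const LIMSEQ_box_bump_approx)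
  have "norm (h x * ?\<phi> k x) \<le> norm (h x)" for x k
    using box_bump_approx_bounds[of c d k x] by (simp add: abs_mult mult_left_le)
  moreover have "(\<lambda>x. h x * indicator (box c d) x) \<in> borel_measurable ?M"
    by (rule borel_measurable_LIMSEQ_real[OF lim meas])
  ultimately have "(\<lambda>k. \<integral>x. h x * ?\<phi> k x \<partial>?M) \<longlonglongrightarrow> (\<integral>x. h x * indicator (box c d) x \<partial>?M)"
    by (intro integral_dominated_convergence[OF _ meas integrable_norm[OF h]]) (use lim in auto)
  moreover have "(\<integral>x. h x * ?\<phi> k x \<partial>?M) = 0" for k
    using orth test_function_box_bump_approx[OF sub] by blast
  ultimately have "(\<integral>x. h x * indicator (box c d) x \<partial>?M) = 0"
    using LIMSEQ_unique[OF _ tendsto_const] by auto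
  moreover have "box c d \<subseteq> \<Omega>" using sub box_subset_cbox by blast
  ultimately show ?thesis using integral_lebesgue_on_mult_indicator_box[OF \<Omega>_sets h] by simp
qed

text \<open>Lebesgue's differentiation theorem, in the form of averages over small cubes, reduces the
  claim to the vanishing of the integrals of \<open>h\<close> over cubes.\<close>
lemma AE_eq_0_if_orthogonal_to_tests:
  fixes h :: "real^'n \<Rightarrow> real"
  assumes \<Omega>: "open \<Omega>" and h: "integrable (lebesgue_on \<Omega>) h"
    and orth: "\<And>\<phi>. test_function \<Omega> \<phi> \<Longrightarrow> (\<integral>x. h x * \<phi> x \<partial>lebesgue_on \<Omega>) = 0"
  shows "AE x in lebesgue_on \<Omega>. h x = 0"
proof -
  have \<Omega>_sets: "\<Omega> \<in> sets lebesgue" using \<Omega> by (simp add: borel_open)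
  define F where "F = (\<lambda>x. if x \<in> \<Omega> then h x else 0)"
  have "set_integrable lebesgue \<Omega> h"
    using h \<Omega>_sets by (simp add: integrable_restrict_space set_integrable_def)
  then have "h integrable_on \<Omega>" by (rule set_lebesgue_integral_eq_integral(1))
  then have "F integrable_on UNIV" unfolding F_def by (simp add: integrable_restrict_UNIV)
  then have "F integrable_on cbox a b" for a b by (rule integrable_on_subcbox) simp
  then obtain N where N: "negligible N"
    "\<And>x e. \<lbrakk>x \<notin> N; 0 < e\<rbrakk> \<Longrightarrow> \<exists>d>0. \<forall>\<eta>. 0 < \<eta> \<and> \<eta> < d \<longrightarrow>
          norm (integral (cbox x (x + \<eta> *\<^sub>R One)) F /\<^sub>R \<eta> ^ DIM(real^'n) - F x) < e"
    using integrable_ccontinuous_explicit[of F] by blast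
  have "h x = 0" if x: "x \<in> \<Omega>" "x \<notin> N" for x
  proof (rule ccontr)
    assume "h x \<noteq> 0"
    then obtain d where d: "d > 0" "\<And>\<eta>. 0 < \<eta> \<and> \<eta> < d \<longrightarrow>
          norm (integral (cbox x (x + \<eta> *\<^sub>R One)) F /\<^sub>R \<eta> ^ DIM(real^'n) - F x) < \<bar>h x\<bar>"
      using N(2)[OF x(2), of "\<bar>h x\<bar>"] by auto
    obtain r where r: "r > 0" "ball x r \<subseteq> \<Omega>" using \<Omega> x(1) open_contains_ball by blast
    define \<eta> where "\<eta> = min (d/2) (r / (2 * real CARD('n)))"
    have card: "0 < real CARD('n)" by simp
    have \<eta>: "0 < \<eta>" "\<eta> < d" using d r card by (auto simp: \<eta>_def)
    have "\<eta> * real CARD('n) \<le> r / (2 * real CARD('n)) * real CARD('n)"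
      using card by (intro mult_right_mono) (auto simp: \<eta>_def)
    also have "\<dots> < r" using card r by simp
    finally have cube: "cbox x (x + \<eta> *\<^sub>R One) \<subseteq> \<Omega>" using cube_subset_ball r(2) by blast
    have "integral (cbox x (x + \<eta> *\<^sub>R One)) F = integral (cbox x (x + \<eta> *\<^sub>R One)) h"
      by (rule integral_cong) (use cube in \<open>auto simp: F_def\<close>)
    also have "\<dots> = 0" by (rule integral_cbox_eq_0_if_orthogonal_to_tests[OF \<Omega> h orth cube])
    finally have "norm (F x) < \<bar>h x\<bar>" using d(2)[of \<eta>] \<eta> by simp
    then show False using x by (simp add: F_def)
  qed
  moreover have "N \<inter> \<Omega> \<in> null_sets (lebesgue_on \<Omega>)"
    using N(1) \<Omega>_sets
    by (simp add: null_sets_restrict_space negligible_iff_null_sets[symmetric] negligible_subset)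
  ultimately show ?thesis by (auto intro: AE_I')
qed

definition L2_weak_gradient ::
    "(real^'n) set \<Rightarrow> (real^'n \<Rightarrow> real) \<Rightarrow> (real^'n \<Rightarrow> real^'n) \<Rightarrow> bool" where
  "L2_weak_gradient \<Omega> v g \<longleftrightarrow> weak_gradient \<Omega> v g \<and> g \<in> borel_measurable (lebesgue_on \<Omega>)
      \<and> integrable (lebesgue_on \<Omega>) (\<lambda>x. (norm (g x))\<^sup>2)"

lemma (in finite_measure) integrable_component_if_square_integrable:
  fixes g :: "'a \<Rightarrow> real^'m"
  assumes "g \<in> borel_measurable M" "integrable M (\<lambda>x. (norm (g x))\<^sup>2)"
  shows "integrable M (\<lambda>x. g x $ i)"
proof (rule Bochner_Integration.integrable_bound)
  show "integrable M (\<lambda>x. 1 + (norm (g x))\<^sup>2)"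
    using assms(2) by (intro Bochner_Integration.integrable_add) auto
  have "(\<lambda>x. g x \<bullet> axis i 1) \<in> borel_measurable M"
    using assms(1) by (intro borel_measurable_inner) auto
  then show "(\<lambda>x. g x $ i) \<in> borel_measurable M" by (simp add: cart_eq_inner_axis)
  have "\<bar>g x $ i\<bar> \<le> 1 + (norm (g x))\<^sup>2" for x
  proof -
    have "0 \<le> (norm (g x) - 1)\<^sup>2" by simp
    then have "2 * norm (g x) \<le> 1 + (norm (g x))\<^sup>2" by (simp add: power2_diff)
    then show ?thesis using component_le_norm_cart[of "g x" i] by linarith
  qed
  then show "AE x in M. norm (g x $ i) \<le> norm (1 + (norm (g x))\<^sup>2)" by simp
qed

lemma L2_weak_gradient_component_integrable:
  assumes "open \<Omega>" "bounded \<Omega>" "L2_weak_gradient \<Omega> v g"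
  shows "integrable (lebesgue_on \<Omega>) (\<lambda>x. g x $ i)"
proof -
  interpret finite_measure "lebesgue_on \<Omega>"
    using assms(1,2) by (intro finite_measure_lebesgue_on lmeasurable_open)
  show ?thesis
    using assms(3) by (intro integrable_component_if_square_integrable) (auto simp: L2_weak_gradient_def)
qed

lemma L2_weak_gradient_unique:
  assumes \<Omega>: "open \<Omega>" "bounded \<Omega>"
    and g1: "L2_weak_gradient \<Omega> v g1" and g2: "L2_weak_gradient \<Omega> v g2"
  shows "AE x in lebesgue_on \<Omega>. g1 x = g2 x"
proof -
  have "AE x in lebesgue_on \<Omega>. g1 x $ i - g2 x $ i = 0" for i
  proof (rule AE_eq_0_if_orthogonal_to_tests[OF \<Omega>(1)])
    have i1: "integrable (lebesgue_on \<Omega>) (\<lambda>x. g1 x $ i)"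
      and i2: "integrable (lebesgue_on \<Omega>) (\<lambda>x. g2 x $ i)"
      using L2_weak_gradient_component_integrable[OF \<Omega>] g1 g2 by blast+
    then show "integrable (lebesgue_on \<Omega>) (\<lambda>x. g1 x $ i - g2 x $ i)" by simp
    fix \<phi> assume \<phi>: "test_function \<Omega> \<phi>"
    have "(\<integral>x. g1 x $ i * \<phi> x \<partial>lebesgue_on \<Omega>) = (\<integral>x. g2 x $ i * \<phi> x \<partial>lebesgue_on \<Omega>)"
      using g1 g2 \<phi> by (auto simp: L2_weak_gradient_def weak_gradient_def)
    moreover have "integrable (lebesgue_on \<Omega>) (\<lambda>x. g1 x $ i * \<phi> x)"
      "integrable (lebesgue_on \<Omega>) (\<lambda>x. g2 x $ i * \<phi> x)"
      using integrable_mult_test_function[OF \<phi> \<Omega>(1)] i1 i2 by blast+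
    ultimately show "(\<integral>x. (g1 x $ i - g2 x $ i) * \<phi> x \<partial>lebesgue_on \<Omega>) = 0"
      by (simp add: left_diff_distrib)
  qed
  then have "AE x in lebesgue_on \<Omega>. \<forall>i\<in>UNIV. g1 x $ i - g2 x $ i = 0"
    by (intro AE_finite_allI) auto
  then show ?thesis by eventually_elim (simp add: vec_eq_iff)
qed

lemma grad_norm2_sq_eq_integral:
  assumes \<Omega>: "open \<Omega>" "bounded \<Omega>" and g: "L2_weak_gradient \<Omega> v g"
  shows "grad_norm2_sq \<Omega> v = (\<integral>x. (norm (g x))\<^sup>2 \<partial>lebesgue_on \<Omega>)"
proof -
  define g' where "g' = (SOME g. L2_weak_gradient \<Omega> v g)"
  have g': "L2_weak_gradient \<Omega> v g'"
    unfolding g'_def by (rule someI[of _ g]) (fact g)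
  have "AE x in lebesgue_on \<Omega>. (norm (g' x))\<^sup>2 = (norm (g x))\<^sup>2"
    using L2_weak_gradient_unique[OF \<Omega> g' g] by eventually_elim simp
  then have "(\<integral>x. (norm (g' x))\<^sup>2 \<partial>lebesgue_on \<Omega>) = (\<integral>x. (norm (g x))\<^sup>2 \<partial>lebesgue_on \<Omega>)"
    using g g' by (intro integral_cong_AE) (auto simp: L2_weak_gradient_def)
  then show ?thesis
    by (simp add: grad_norm2_sq_def g'_def L2_weak_gradient_def)
qed

lemma weak_gradient_lincomb:
  assumes \<Omega>: "open \<Omega>" and wu: "weak_gradient \<Omega> u g1" and wv: "weak_gradient \<Omega> v g2"
    and iu: "integrable (lebesgue_on \<Omega>) u" and iv: "integrable (lebesgue_on \<Omega>) v"
    and ig1: "\<And>i. integrable (lebesgue_on \<Omega>) (\<lambda>x. g1 x $ i)"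
    and ig2: "\<And>i. integrable (lebesgue_on \<Omega>) (\<lambda>x. g2 x $ i)"
  shows "weak_gradient \<Omega> (\<lambda>x. s * u x + r * v x) (\<lambda>x. s *\<^sub>R g1 x + r *\<^sub>R g2 x)"
proof -
  let ?M = "lebesgue_on \<Omega>"
  have "(\<integral>x. (s * u x + r * v x) * partial_deriv \<phi> i x \<partial>?M) =
      - (\<integral>x. (s *\<^sub>R g1 x + r *\<^sub>R g2 x) $ i * \<phi> x \<partial>?M)" if \<phi>: "test_function \<Omega> \<phi>" for \<phi> i
  proof -
    have "(\<integral>x. (s * u x + r * v x) * partial_deriv \<phi> i x \<partial>?M)
        = s * (\<integral>x. u x * partial_deriv \<phi> i x \<partial>?M) + r * (\<integral>x. v x * partial_deriv \<phi> i x \<partial>?M)"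
      using integrable_mult_test_function_partial_deriv[OF \<phi> \<Omega>] iu iv
      by (simp add: algebra_simps)
    also have "\<dots> = - (s * (\<integral>x. g1 x $ i * \<phi> x \<partial>?M) + r * (\<integral>x. g2 x $ i * \<phi> x \<partial>?M))"
      using wu wv \<phi> by (simp add: weak_gradient_def)
    also have "s * (\<integral>x. g1 x $ i * \<phi> x \<partial>?M) + r * (\<integral>x. g2 x $ i * \<phi> x \<partial>?M)
        = (\<integral>x. s * (g1 x $ i * \<phi> x) + r * (g2 x $ i * \<phi> x) \<partial>?M)"
      using integrable_mult_test_function[OF \<phi> \<Omega>] ig1 ig2 by simp
    finally show ?thesis by (simp add: algebra_simps)
  qed
  with wu wv show ?thesis
    by (auto simp: weak_gradient_def locally_integrable_on_def)
qed

lemma power2_norm_add_le: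
  fixes a b :: "'a::real_normed_vector"
  shows "(norm (a + b))\<^sup>2 \<le> 2 * (norm a)\<^sup>2 + 2 * (norm b)\<^sup>2"
proof -
  have "(norm (a + b))\<^sup>2 \<le> (norm a + norm b)\<^sup>2"
    by (intro power_mono norm_triangle_ineq) simp
  also have "\<dots> \<le> 2 * (norm a)\<^sup>2 + 2 * (norm b)\<^sup>2"
    using sum_squares_ge_zero[of "norm a - norm b" 0] by (simp add: power2_eq_square algebra_simps)
  finally show ?thesis .
qed

lemma L2_weak_gradient_lincomb:
  assumes \<Omega>: "open \<Omega>" "bounded \<Omega>" and g1: "L2_weak_gradient \<Omega> u g1" and g2: "L2_weak_gradient \<Omega> v g2"
    and iu: "integrable (lebesgue_on \<Omega>) u" and iv: "integrable (lebesgue_on \<Omega>) v"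
  shows "L2_weak_gradient \<Omega> (\<lambda>x. s * u x + r * v x) (\<lambda>x. s *\<^sub>R g1 x + r *\<^sub>R g2 x)"
proof -
  let ?M = "lebesgue_on \<Omega>" and ?g = "\<lambda>x. s *\<^sub>R g1 x + r *\<^sub>R g2 x"
  have weak: "weak_gradient \<Omega> (\<lambda>x. s * u x + r * v x) ?g"
    using g1 g2 iu iv L2_weak_gradient_component_integrable[OF \<Omega>]
    by (intro weak_gradient_lincomb[OF \<Omega>(1)]) (auto simp: L2_weak_gradient_def)
  have meas: "?g \<in> borel_measurable ?M"
    using g1 g2 by (auto simp: L2_weak_gradient_def)
  have "integrable ?M (\<lambda>x. (norm (?g x))\<^sup>2)"
  proof (rule Bochner_Integration.integrable_bound)
    show "integrable ?M (\<lambda>x. 2 * s\<^sup>2 * (norm (g1 x))\<^sup>2 + 2 * r\<^sup>2 * (norm (g2 x))\<^sup>2)"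
      using g1 g2 by (simp add: L2_weak_gradient_def)
    show "(\<lambda>x. (norm (?g x))\<^sup>2) \<in> borel_measurable ?M"
      using meas by measurable
    have "(norm (?g x))\<^sup>2 \<le> 2 * s\<^sup>2 * (norm (g1 x))\<^sup>2 + 2 * r\<^sup>2 * (norm (g2 x))\<^sup>2" for x
      using power2_norm_add_le[of "s *\<^sub>R g1 x" "r *\<^sub>R g2 x"] by (simp add: power_mult_distrib)
    then show "AE x in ?M. norm ((norm (?g x))\<^sup>2)
        \<le> norm (2 * s\<^sup>2 * (norm (g1 x))\<^sup>2 + 2 * r\<^sup>2 * (norm (g2 x))\<^sup>2)"
      by (simp add: order_trans[OF _ abs_ge_self])
  qed
  with weak meas show ?thesis by (simp add: L2_weak_gradient_def)
qed

section \<open>Convexity of the logarithm of the integral of the exponential\<close>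

lemma add_one_less_exp:
  fixes x :: real
  assumes "x \<noteq> 0"
  shows "1 + x < exp x"
proof (cases "0 \<le> 1 + x/2")
  case True
  have "0 < x\<^sup>2" using assms by simp
  then have "1 + x < (1 + x/2)\<^sup>2"
    by (simp add: power2_eq_square field_simps)
  also have "\<dots> \<le> (exp (x/2))\<^sup>2"
    using True by (intro power_mono exp_ge_add_one_self) (simp add: add.commute)
  also have "\<dots> = exp x" by (simp add: power2_eq_square exp_add[symmetric])
  finally show ?thesis .
next
  case False
  then show ?thesis using exp_gt_zero[of x] by linarith
qed

lemma exp_convex_combination_le:
  fixes p q t :: real
  assumes "0 \<le> t" "t \<le> 1"
  shows "exp (t * p + (1 - t) * q) \<le> t * exp p + (1 - t) * exp q"
  using convex_onD[OF exp_convex, of t q p] assms by (simp add: algebra_simps)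

lemma exp_convex_combination_less:
  fixes p q t :: real
  assumes "0 < t" "t < 1" "p \<noteq> q"
  shows "exp (t * p + (1 - t) * q) < t * exp p + (1 - t) * exp q"
proof -
  define m where "m = t * p + (1 - t) * q"
  have "p \<noteq> m"
  proof
    assume "p = m"
    then have "(1 - t) * (p - q) = 0" by (simp add: m_def algebra_simps)
    with assms show False by simp
  qed
  \<comment> \<open>compare both sides with the tangent line of \<open>exp\<close> at \<open>m\<close>\<close>
  have "exp m = t * (exp m * (1 + (p - m))) + (1 - t) * (exp m * (1 + (q - m)))"
    by (simp add: m_def algebra_simps)
  also have "\<dots> < t * exp p + (1 - t) * exp q"
  proof (rule add_less_le_mono)
    have "exp m * (1 + (p - m)) < exp m * exp (p - m)"
      using add_one_less_exp[of "p - m"] \<open>p \<noteq> m\<close> by simp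
    then show "t * (exp m * (1 + (p - m))) < t * exp p"
      using assms(1) by (simp add: exp_diff)
    have "exp m * (1 + (q - m)) \<le> exp m * exp (q - m)" by simp
    then show "(1 - t) * (exp m * (1 + (q - m))) \<le> (1 - t) * exp q"
      using assms(2) by (intro mult_left_mono) (simp_all add: exp_diff)
  qed
  finally show ?thesis by (simp add: m_def)
qed

lemma exp_convex_combination_normalized:
  fixes u v t A B :: real
  assumes "0 < A" "0 < B" "0 < t" "t < 1"
  defines "K \<equiv> t * ln A + (1 - t) * ln B"
  shows "exp (t * u + (1 - t) * v) \<le> exp K * (t * (exp u / A) + (1 - t) * (exp v / B))"
    and "u - ln A \<noteq> v - ln B \<Longrightarrow>
      exp (t * u + (1 - t) * v) < exp K * (t * (exp u / A) + (1 - t) * (exp v / B))"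
proof -
  have eq: "exp (t * u + (1 - t) * v) = exp K * exp (t * (u - ln A) + (1 - t) * (v - ln B))"
    by (simp add: K_def algebra_simps flip: exp_add)
  have "exp u / A = exp (u - ln A)" "exp v / B = exp (v - ln B)"
    using assms(1,2) by (simp_all add: exp_diff)
  then show "exp (t * u + (1 - t) * v) \<le> exp K * (t * (exp u / A) + (1 - t) * (exp v / B))"
    and "u - ln A \<noteq> v - ln B \<Longrightarrow>
      exp (t * u + (1 - t) * v) < exp K * (t * (exp u / A) + (1 - t) * (exp v / B))"
    unfolding eq using assms(3,4)
    by (auto intro!: mult_left_mono exp_convex_combination_le exp_convex_combination_less)
qed

lemma (in finite_measure) integral_exp_pos:
  fixes f :: "'a \<Rightarrow> real"
  assumes "integrable M (\<lambda>x. exp (f x))" "emeasure M (space M) \<noteq> 0"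
  shows "0 < (\<integral>x. exp (f x) \<partial>M)"
  using integral_less_AE_space[of "\<lambda>x. 0" "\<lambda>x. exp (f x)"] assms by auto

lemma (in finite_measure) AE_eq_if_AE_eq_plus_const:
  fixes u v :: "'a \<Rightarrow> real"
  assumes "integrable M u" "integrable M v" "AE x in M. u x = v x + c"
    and "(\<integral>x. u x \<partial>M) = (\<integral>x. v x \<partial>M)" "emeasure M (space M) \<noteq> 0"
  shows "AE x in M. u x = v x"
proof -
  have "(\<integral>x. u x \<partial>M) = (\<integral>x. v x + c \<partial>M)"
    using assms(1-3) by (intro integral_cong_AE) auto
  also have "\<dots> = (\<integral>x. v x \<partial>M) + c * measure M (space M)"
    using assms(2) by simp
  finally have "c * measure M (space M) = 0" using assms(4) by simp
  moreover have "measure M (space M) \<noteq> 0"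
    using assms(5) by (simp add: emeasure_eq_measure)
  ultimately show ?thesis using assms(3) by simp
qed

lemma (in finite_measure) integral_less_if_strict_outside_AE:
  fixes f g :: "'a \<Rightarrow> real"
  assumes "integrable M f" "integrable M g" "\<And>x. f x \<le> g x" "\<And>x. \<not> P x \<Longrightarrow> f x < g x"
    and "\<not> (AE x in M. P x)" "{x \<in> space M. \<not> P x} \<in> sets M"
  shows "(\<integral>x. f x \<partial>M) < (\<integral>x. g x \<partial>M)"
proof -
  have "emeasure M {x \<in> space M. \<not> P x} \<noteq> 0"
    using AE_iff_measurable[OF assms(6) refl] assms(5) by simp
  then show ?thesis
    by (rule integral_less_AE[OF assms(1,2) _ assms(6)]) (use assms(3,4) in \<open>auto simp: less_le\<close>)
qed

lemma (in finite_measure) ln_integral_exp_convex: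
  fixes u v :: "'a \<Rightarrow> real"
  assumes iu: "integrable M u" and iv: "integrable M v"
    and eu: "integrable M (\<lambda>x. exp (u x))" and ev: "integrable M (\<lambda>x. exp (v x))"
    and t: "0 < t" "t < 1" and pos: "emeasure M (space M) \<noteq> 0"
  shows "integrable M (\<lambda>x. exp (t * u x + (1 - t) * v x))"
    and "ln (\<integral>x. exp (t * u x + (1 - t) * v x) \<partial>M)
          \<le> t * ln (\<integral>x. exp (u x) \<partial>M) + (1 - t) * ln (\<integral>x. exp (v x) \<partial>M)"
    and "(\<integral>x. u x \<partial>M) = (\<integral>x. v x \<partial>M) \<Longrightarrow> \<not> (AE x in M. u x = v x) \<Longrightarrow>
          ln (\<integral>x. exp (t * u x + (1 - t) * v x) \<partial>M)
          < t * ln (\<integral>x. exp (u x) \<partial>M) + (1 - t) * ln (\<integral>x. exp (v x) \<partial>M)"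
proof -
  define A where "A = (\<integral>x. exp (u x) \<partial>M)"
  define B where "B = (\<integral>x. exp (v x) \<partial>M)"
  define K where "K = t * ln A + (1 - t) * ln B"
  define w where "w = (\<lambda>x. exp (t * u x + (1 - t) * v x))"
  define R where "R = (\<lambda>x. exp K * (t * (exp (u x) / A) + (1 - t) * (exp (v x) / B)))"
  have A: "0 < A" and B: "0 < B" unfolding A_def B_def using eu ev pos by (simp_all add: integral_exp_pos)
  note normalized = exp_convex_combination_normalized[OF A B t, folded K_def]
  have iR: "integrable M R" unfolding R_def using eu ev by simp
  have "(\<integral>x. R x \<partial>M) = exp K * (t * (A / A) + (1 - t) * (B / B))"
    unfolding R_def A_def B_def using eu ev by simp
  then have intR: "(\<integral>x. R x \<partial>M) = exp K" using A B by simp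
  have le: "w x \<le> R x" for x unfolding w_def R_def by (rule normalized(1))
  have "w \<in> borel_measurable M" unfolding w_def using iu iv by measurable
  with iR le show iw: "integrable M (\<lambda>x. exp (t * u x + (1 - t) * v x))"
    unfolding w_def by (intro Bochner_Integration.integrable_bound[OF iR])
      (auto intro: order_trans[OF _ abs_ge_self])
  have wpos: "0 < (\<integral>x. w x \<partial>M)" unfolding w_def using iw pos by (rule integral_exp_pos)
  have "(\<integral>x. w x \<partial>M) \<le> exp K"
    using integral_mono[OF iw[folded w_def] iR le] intR by simp
  with wpos show "ln (\<integral>x. exp (t * u x + (1 - t) * v x) \<partial>M)
          \<le> t * ln (\<integral>x. exp (u x) \<partial>M) + (1 - t) * ln (\<integral>x. exp (v x) \<partial>M)"
    unfolding w_def[symmetric] A_def[symmetric] B_def[symmetric] K_def[symmetric]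
    using ln_le_cancel_iff[of _ "exp K"] by (metis exp_gt_zero ln_exp)
  assume means: "(\<integral>x. u x \<partial>M) = (\<integral>x. v x \<partial>M)" and "\<not> (AE x in M. u x = v x)"
  then have "\<not> (AE x in M. u x = v x + (ln A - ln B))"
    using AE_eq_if_AE_eq_plus_const[OF iu iv _ means pos] by blast
  moreover have "(AE x in M. u x - ln A = v x - ln B) \<Longrightarrow> AE x in M. u x = v x + (ln A - ln B)"
    by (erule AE_mp) (auto intro!: AE_I2)
  ultimately have nonconst: "\<not> (AE x in M. u x - ln A = v x - ln B)" by blast
  have "{x \<in> space M. \<not> (u x - ln A = v x - ln B)} \<in> sets M" using iu iv by measurable
  moreover have "w x < R x" if "\<not> (u x - ln A = v x - ln B)" for x
    unfolding w_def R_def using that by (rule normalized(2))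
  ultimately have "(\<integral>x. w x \<partial>M) < (\<integral>x. R x \<partial>M)"
    using iw[folded w_def] iR le nonconst by (intro integral_less_if_strict_outside_AE) auto
  with wpos intR show "ln (\<integral>x. exp (t * u x + (1 - t) * v x) \<partial>M)
          < t * ln (\<integral>x. exp (u x) \<partial>M) + (1 - t) * ln (\<integral>x. exp (v x) \<partial>M)"
    unfolding w_def[symmetric] A_def[symmetric] B_def[symmetric] K_def[symmetric]
    by (metis exp_gt_zero ln_exp ln_less_cancel_iff)
qed

definition log_mean_exp :: "(real^'n) set \<Rightarrow> (real^'n \<Rightarrow> real) \<Rightarrow> real" where
  "log_mean_exp \<Omega> v = ln ((\<integral>x. exp (v x) \<partial>lebesgue_on \<Omega>) / measure lebesgue \<Omega>)"

lemma
  fixes \<Omega> :: "(real^'n) set"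
  assumes "open \<Omega>" "bounded \<Omega>" "\<Omega> \<noteq> {}"
  shows finite_measure_lebesgue_on_open_bounded: "finite_measure (lebesgue_on \<Omega>)"
    and emeasure_lebesgue_on_open_nonempty: "emeasure (lebesgue_on \<Omega>) (space (lebesgue_on \<Omega>)) \<noteq> 0"
    and measure_open_bounded_pos: "0 < measure lebesgue \<Omega>"
proof -
  have lmeas: "\<Omega> \<in> lmeasurable" using assms by (simp add: lmeasurable_open)
  then show "finite_measure (lebesgue_on \<Omega>)" by (rule finite_measure_lebesgue_on)
  have "\<not> negligible \<Omega>" using assms by (simp add: open_not_negligible)
  then show "emeasure (lebesgue_on \<Omega>) (space (lebesgue_on \<Omega>)) \<noteq> 0"
    using lmeas by (simp add: emeasure_restrict_space negligible_iff_emeasure0)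
  then show "0 < measure lebesgue \<Omega>"
    using lmeas by (simp add: emeasure_restrict_space emeasure_eq_measure2 zero_less_measure_iff)
qed

lemma log_mean_exp_convex:
  fixes \<Omega> :: "(real^'n) set"
  assumes \<Omega>: "open \<Omega>" "bounded \<Omega>" "\<Omega> \<noteq> {}"
    and iu: "integrable (lebesgue_on \<Omega>) u" and iv: "integrable (lebesgue_on \<Omega>) v"
    and eu: "integrable (lebesgue_on \<Omega>) (\<lambda>x. exp (u x))"
    and ev: "integrable (lebesgue_on \<Omega>) (\<lambda>x. exp (v x))"
    and t: "0 < t" "t < 1"
  shows "integrable (lebesgue_on \<Omega>) (\<lambda>x. exp (t * u x + (1 - t) * v x))"
    and "log_mean_exp \<Omega> (\<lambda>x. t * u x + (1 - t) * v x)
          \<le> t * log_mean_exp \<Omega> u + (1 - t) * log_mean_exp \<Omega> v"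
    and "(\<integral>x. u x \<partial>lebesgue_on \<Omega>) = (\<integral>x. v x \<partial>lebesgue_on \<Omega>) \<Longrightarrow>
          \<not> (AE x in lebesgue_on \<Omega>. u x = v x) \<Longrightarrow>
          log_mean_exp \<Omega> (\<lambda>x. t * u x + (1 - t) * v x)
          < t * log_mean_exp \<Omega> u + (1 - t) * log_mean_exp \<Omega> v"
proof -
  interpret finite_measure "lebesgue_on \<Omega>" by (rule finite_measure_lebesgue_on_open_bounded[OF \<Omega>])
  note pos = emeasure_lebesgue_on_open_nonempty[OF \<Omega>]
  note lse = ln_integral_exp_convex[OF iu iv eu ev t pos]
  have ln_mean: "log_mean_exp \<Omega> f = ln (\<integral>x. exp (f x) \<partial>lebesgue_on \<Omega>) - ln (measure lebesgue \<Omega>)"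
    if "integrable (lebesgue_on \<Omega>) (\<lambda>x. exp (f x))" for f
    using integral_exp_pos[OF that pos] measure_open_bounded_pos[OF \<Omega>]
    by (simp add: log_mean_exp_def ln_div)
  show "integrable (lebesgue_on \<Omega>) (\<lambda>x. exp (t * u x + (1 - t) * v x))" by (fact lse(1))
  show "log_mean_exp \<Omega> (\<lambda>x. t * u x + (1 - t) * v x)
          \<le> t * log_mean_exp \<Omega> u + (1 - t) * log_mean_exp \<Omega> v"
    unfolding ln_mean[OF lse(1)] ln_mean[OF eu] ln_mean[OF ev] using lse(2) by argo
  show "log_mean_exp \<Omega> (\<lambda>x. t * u x + (1 - t) * v x)
          < t * log_mean_exp \<Omega> u + (1 - t) * log_mean_exp \<Omega> v"
    if "(\<integral>x. u x \<partial>lebesgue_on \<Omega>) = (\<integral>x. v x \<partial>lebesgue_on \<Omega>)"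
      "\<not> (AE x in lebesgue_on \<Omega>. u x = v x)"
    unfolding ln_mean[OF lse(1)] ln_mean[OF eu] ln_mean[OF ev] using lse(3)[OF that] by argo
qed

section \<open>Convexity of the functional\<close>

definition bfun_real :: "(real^'n) set \<Rightarrow> (real^'n \<Rightarrow> real) \<Rightarrow> real \<Rightarrow> (real^'n \<Rightarrow> real) \<Rightarrow> real" where
  "bfun_real \<Omega> C \<delta> v = Nconst \<Omega> C \<delta> * log_mean_exp \<Omega> (\<lambda>x. - v x)
     + Pconst \<Omega> C \<delta> * log_mean_exp \<Omega> v + (\<integral>x. C x * v x \<partial>lebesgue_on \<Omega>)"

lemma bfun_eq_bfun_real:
  assumes "integrable (lebesgue_on \<Omega>) (\<lambda>x. exp (- v x))" "integrable (lebesgue_on \<Omega>) (\<lambda>x. exp (v x))"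
    "integrable (lebesgue_on \<Omega>) (\<lambda>x. C x * v x)"
  shows "bfun \<Omega> C \<delta> v = ereal (bfun_real \<Omega> C \<delta> v)"
  using assms by (simp add: bfun_def bfun_real_def log_mean_exp_def)

lemma Sigma_setD:
  assumes "v \<in> Sigma_set \<Omega> C \<delta>"
  shows "integrable (lebesgue_on \<Omega>) v" "(\<integral>x. v x \<partial>lebesgue_on \<Omega>) = 0"
    "integrable (lebesgue_on \<Omega>) (\<lambda>x. exp (- v x))" "integrable (lebesgue_on \<Omega>) (\<lambda>x. exp (v x))"
    "integrable (lebesgue_on \<Omega>) (\<lambda>x. C x * v x)" "\<exists>g. L2_weak_gradient \<Omega> v g"
proof -
  have "bfun \<Omega> C \<delta> v < \<infinity>" using assms by (simp add: Sigma_set_def)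
  then show "integrable (lebesgue_on \<Omega>) (\<lambda>x. exp (- v x))" "integrable (lebesgue_on \<Omega>) (\<lambda>x. exp (v x))"
    "integrable (lebesgue_on \<Omega>) (\<lambda>x. C x * v x)"
    by (auto simp: bfun_def split: if_splits)
  show "integrable (lebesgue_on \<Omega>) v" "(\<integral>x. v x \<partial>lebesgue_on \<Omega>) = 0" "\<exists>g. L2_weak_gradient \<Omega> v g"
    using assms by (auto simp: Sigma_set_def in_L1_def grad_in_L2_def L2_weak_gradient_def)
qed

lemma bbar_eq_on_Sigma_set:
  assumes "v \<in> Sigma_set \<Omega> C \<delta>"
  shows "bbar \<Omega> C \<delta> lam v = ereal (lam\<^sup>2 * grad_norm2_sq \<Omega> v + bfun_real \<Omega> C \<delta> v)"
  using assms bfun_eq_bfun_real[OF Sigma_setD(3-5)[OF assms]] by (simp add: bbar_def)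

lemma Sigma_set_convex:
  fixes \<Omega> :: "(real^'n) set"
  assumes \<Omega>: "open \<Omega>" "bounded \<Omega>" "\<Omega> \<noteq> {}"
    and u: "u \<in> Sigma_set \<Omega> C \<delta>" and v: "v \<in> Sigma_set \<Omega> C \<delta>" and t: "0 < t" "t < 1"
  shows "(\<lambda>x. t * u x + (1 - t) * v x) \<in> Sigma_set \<Omega> C \<delta>"
proof -
  let ?M = "lebesgue_on \<Omega>" and ?w = "\<lambda>x. t * u x + (1 - t) * v x"
  note uD = Sigma_setD[OF u] and vD = Sigma_setD[OF v]
  have "integrable ?M (\<lambda>x. exp (t * - u x + (1 - t) * - v x))"
    using uD vD by (intro log_mean_exp_convex(1)[OF \<Omega> _ _ _ _ t]) simp_all
  then have exp_neg: "integrable ?M (\<lambda>x. exp (- ?w x))" by (simp add: algebra_simps)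
  have "integrable ?M (\<lambda>x. t * (C x * u x) + (1 - t) * (C x * v x))" using uD(5) vD(5) by simp
  then have "integrable ?M (\<lambda>x. C x * ?w x)" by (simp add: algebra_simps)
  moreover have "\<exists>g. L2_weak_gradient \<Omega> ?w g"
    using uD(1,6) vD(1,6) L2_weak_gradient_lincomb[OF \<Omega>(1,2)] by blast
  moreover note exp_neg log_mean_exp_convex(1)[OF \<Omega> uD(1) vD(1) uD(4) vD(4) t]
  ultimately show ?thesis
    using uD(1,2) vD(1,2) bfun_eq_bfun_real[of \<Omega> ?w C \<delta>]
    by (simp add: Sigma_set_def in_L1_def grad_in_L2_def L2_weak_gradient_def)
qed

lemma power2_norm_convex_combination_le:
  fixes a b :: "'a::real_normed_vector"
  assumes "0 \<le> t" "t \<le> 1"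
  shows "(norm (t *\<^sub>R a + (1 - t) *\<^sub>R b))\<^sup>2 \<le> t * (norm a)\<^sup>2 + (1 - t) * (norm b)\<^sup>2"
proof -
  have "(norm (t *\<^sub>R a + (1 - t) *\<^sub>R b))\<^sup>2 \<le> (t * norm a + (1 - t) * norm b)\<^sup>2"
    using norm_triangle_ineq[of "t *\<^sub>R a" "(1 - t) *\<^sub>R b"] assms by (intro power_mono) simp_all
  also have "\<dots> = t * (norm a)\<^sup>2 + (1 - t) * (norm b)\<^sup>2 - t * (1 - t) * (norm a - norm b)\<^sup>2"
    by (simp add: power2_eq_square algebra_simps)
  also have "\<dots> \<le> t * (norm a)\<^sup>2 + (1 - t) * (norm b)\<^sup>2" using assms by simp
  finally show ?thesis .
qed

lemma grad_norm2_sq_convex: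
  assumes \<Omega>: "open \<Omega>" "bounded \<Omega>" and g1: "L2_weak_gradient \<Omega> u g1" and g2: "L2_weak_gradient \<Omega> v g2"
    and iu: "integrable (lebesgue_on \<Omega>) u" and iv: "integrable (lebesgue_on \<Omega>) v"
    and t: "0 \<le> t" "t \<le> 1"
  shows "grad_norm2_sq \<Omega> (\<lambda>x. t * u x + (1 - t) * v x)
    \<le> t * grad_norm2_sq \<Omega> u + (1 - t) * grad_norm2_sq \<Omega> v"
proof -
  let ?M = "lebesgue_on \<Omega>"
  have g: "L2_weak_gradient \<Omega> (\<lambda>x. t * u x + (1 - t) * v x) (\<lambda>x. t *\<^sub>R g1 x + (1 - t) *\<^sub>R g2 x)"
    by (rule L2_weak_gradient_lincomb[OF \<Omega> g1 g2 iu iv])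
  have "(\<integral>x. (norm (t *\<^sub>R g1 x + (1 - t) *\<^sub>R g2 x))\<^sup>2 \<partial>?M)
      \<le> (\<integral>x. t * (norm (g1 x))\<^sup>2 + (1 - t) * (norm (g2 x))\<^sup>2 \<partial>?M)"
    using g g1 g2 t power2_norm_convex_combination_le
    by (intro integral_mono) (auto simp: L2_weak_gradient_def)
  also have "\<dots> = t * (\<integral>x. (norm (g1 x))\<^sup>2 \<partial>?M) + (1 - t) * (\<integral>x. (norm (g2 x))\<^sup>2 \<partial>?M)"
    using g1 g2 by (simp add: L2_weak_gradient_def)
  finally show ?thesis
    by (simp add: grad_norm2_sq_eq_integral[OF \<Omega> g] grad_norm2_sq_eq_integral[OF \<Omega> g1]
        grad_norm2_sq_eq_integral[OF \<Omega> g2])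
qed

lemma Nconst_nonneg: "0 \<le> Nconst \<Omega> C \<delta>"
  unfolding Nconst_def by (intro add_nonneg_nonneg zero_le_power2 integral_nonneg_AE) auto

lemma Pconst_pos:
  assumes "\<delta> \<noteq> 0"
  shows "0 < Pconst \<Omega> C \<delta>"
proof -
  have "0 \<le> (\<integral>x. - min (C x) 0 \<partial>lebesgue_on \<Omega>)" by (intro integral_nonneg_AE) auto
  then have "(\<integral>x. min (C x) 0 \<partial>lebesgue_on \<Omega>) \<le> 0" by simp
  moreover have "0 < \<delta>\<^sup>2" using assms by simp
  ultimately show ?thesis unfolding Pconst_def by linarith
qed

lemma bfun_real_convex:
  fixes \<Omega> :: "(real^'n) set"
  assumes \<Omega>: "open \<Omega>" "bounded \<Omega>" "\<Omega> \<noteq> {}" and \<delta>: "\<delta> \<noteq> 0"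
    and u: "u \<in> Sigma_set \<Omega> C \<delta>" and v: "v \<in> Sigma_set \<Omega> C \<delta>" and t: "0 < t" "t < 1"
  shows "bfun_real \<Omega> C \<delta> (\<lambda>x. t * u x + (1 - t) * v x)
      \<le> t * bfun_real \<Omega> C \<delta> u + (1 - t) * bfun_real \<Omega> C \<delta> v"
    and "\<not> (AE x in lebesgue_on \<Omega>. u x = v x) \<Longrightarrow> bfun_real \<Omega> C \<delta> (\<lambda>x. t * u x + (1 - t) * v x)
      < t * bfun_real \<Omega> C \<delta> u + (1 - t) * bfun_real \<Omega> C \<delta> v"
proof -
  let ?M = "lebesgue_on \<Omega>" and ?w = "\<lambda>x. t * u x + (1 - t) * v x"
  let ?N = "Nconst \<Omega> C \<delta>" and ?P = "Pconst \<Omega> C \<delta>"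
  note uD = Sigma_setD[OF u] and vD = Sigma_setD[OF v]
  note lme = log_mean_exp_convex[OF \<Omega> uD(1) vD(1) uD(4) vD(4) t]
  have "log_mean_exp \<Omega> (\<lambda>x. t * - u x + (1 - t) * - v x)
      \<le> t * log_mean_exp \<Omega> (\<lambda>x. - u x) + (1 - t) * log_mean_exp \<Omega> (\<lambda>x. - v x)"
    using uD vD by (intro log_mean_exp_convex(2)[OF \<Omega> _ _ _ _ t]) simp_all
  moreover have "(\<lambda>x. t * - u x + (1 - t) * - v x) = (\<lambda>x. - ?w x)" by (simp add: fun_eq_iff)
  ultimately have "log_mean_exp \<Omega> (\<lambda>x. - ?w x)
      \<le> t * log_mean_exp \<Omega> (\<lambda>x. - u x) + (1 - t) * log_mean_exp \<Omega> (\<lambda>x. - v x)" by simp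
  then have "?N * log_mean_exp \<Omega> (\<lambda>x. - ?w x)
      \<le> t * (?N * log_mean_exp \<Omega> (\<lambda>x. - u x)) + (1 - t) * (?N * log_mean_exp \<Omega> (\<lambda>x. - v x))"
    by (auto dest: mult_left_mono[OF _ Nconst_nonneg] simp: algebra_simps)
  moreover have "(\<integral>x. C x * ?w x \<partial>?M) = t * (\<integral>x. C x * u x \<partial>?M) + (1 - t) * (\<integral>x. C x * v x \<partial>?M)"
    using uD(5) vD(5) by (simp add: algebra_simps)
  moreover have "?P * log_mean_exp \<Omega> ?w
      \<le> t * (?P * log_mean_exp \<Omega> u) + (1 - t) * (?P * log_mean_exp \<Omega> v)"
    using mult_left_mono[OF lme(2) less_imp_le[OF Pconst_pos[OF \<delta>]]] by (simp add: algebra_simps)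
  moreover have "\<not> (AE x in ?M. u x = v x) \<Longrightarrow> ?P * log_mean_exp \<Omega> ?w
      < t * (?P * log_mean_exp \<Omega> u) + (1 - t) * (?P * log_mean_exp \<Omega> v)"
    using mult_strict_left_mono[OF lme(3) Pconst_pos[OF \<delta>]] uD(2) vD(2) by (simp add: algebra_simps)
  ultimately show "bfun_real \<Omega> C \<delta> ?w \<le> t * bfun_real \<Omega> C \<delta> u + (1 - t) * bfun_real \<Omega> C \<delta> v"
    and "\<not> (AE x in ?M. u x = v x) \<Longrightarrow>
      bfun_real \<Omega> C \<delta> ?w < t * bfun_real \<Omega> C \<delta> u + (1 - t) * bfun_real \<Omega> C \<delta> v"
    unfolding bfun_real_def by (simp_all add: algebra_simps)
qed

lemma bbar_convex_on_Sigma_set: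
  fixes \<Omega> :: "(real^'n) set"
  assumes \<Omega>: "open \<Omega>" "bounded \<Omega>" "\<Omega> \<noteq> {}" and \<delta>: "\<delta> \<noteq> 0"
    and u: "u \<in> Sigma_set \<Omega> C \<delta>" and v: "v \<in> Sigma_set \<Omega> C \<delta>" and t: "0 < t" "t < 1"
  shows "bbar \<Omega> C \<delta> lam (\<lambda>x. t * u x + (1 - t) * v x)
      \<le> ereal t * bbar \<Omega> C \<delta> lam u + ereal (1 - t) * bbar \<Omega> C \<delta> lam v"
    and "\<not> (AE x in lebesgue_on \<Omega>. u x = v x) \<Longrightarrow> bbar \<Omega> C \<delta> lam (\<lambda>x. t * u x + (1 - t) * v x)
      < ereal t * bbar \<Omega> C \<delta> lam u + ereal (1 - t) * bbar \<Omega> C \<delta> lam v"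
proof -
  let ?w = "\<lambda>x. t * u x + (1 - t) * v x"
  let ?F = "\<lambda>v. lam\<^sup>2 * grad_norm2_sq \<Omega> v + bfun_real \<Omega> C \<delta> v"
  note uD = Sigma_setD[OF u] and vD = Sigma_setD[OF v]
  obtain g1 g2 where g1: "L2_weak_gradient \<Omega> u g1" and g2: "L2_weak_gradient \<Omega> v g2"
    using uD(6) vD(6) by blast
  have "lam\<^sup>2 * grad_norm2_sq \<Omega> ?w
      \<le> t * (lam\<^sup>2 * grad_norm2_sq \<Omega> u) + (1 - t) * (lam\<^sup>2 * grad_norm2_sq \<Omega> v)"
    using mult_left_mono[OF grad_norm2_sq_convex[OF \<Omega>(1,2) g1 g2 uD(1) vD(1)] zero_le_power2[of lam]] t
    by (simp add: algebra_simps)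
  with bfun_real_convex[OF \<Omega> \<delta> u v t]
  have le: "?F ?w \<le> t * ?F u + (1 - t) * ?F v"
    and less: "\<not> (AE x in lebesgue_on \<Omega>. u x = v x) \<Longrightarrow> ?F ?w < t * ?F u + (1 - t) * ?F v"
    by (simp_all add: distrib_left)
  have "bbar \<Omega> C \<delta> lam ?w = ereal (?F ?w)"
    "ereal t * bbar \<Omega> C \<delta> lam u + ereal (1 - t) * bbar \<Omega> C \<delta> lam v = ereal (t * ?F u + (1 - t) * ?F v)"
    by (simp_all add: bbar_eq_on_Sigma_set Sigma_set_convex[OF \<Omega> u v t] u v)
  with le less show "bbar \<Omega> C \<delta> lam ?w \<le> ereal t * bbar \<Omega> C \<delta> lam u + ereal (1 - t) * bbar \<Omega> C \<delta> lam v"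
    and "\<not> (AE x in lebesgue_on \<Omega>. u x = v x) \<Longrightarrow>
      bbar \<Omega> C \<delta> lam ?w < ereal t * bbar \<Omega> C \<delta> lam u + ereal (1 - t) * bbar \<Omega> C \<delta> lam v"
    by simp_all
qed

lemma bbar_neq_minf: "bbar \<Omega> C \<delta> lam v \<noteq> -\<infinity>"
  by (simp add: bbar_def bfun_def)

lemma ereal_convex_combination_eq_infinity:
  fixes a b :: ereal
  assumes "0 < t" "t < 1" "a \<noteq> -\<infinity>" "b \<noteq> -\<infinity>" "a = \<infinity> \<or> b = \<infinity>"
  shows "ereal t * a + ereal (1 - t) * b = \<infinity>"
  using assms by (cases a; cases b) auto

theorem lemma2p5:
  fixes \<Omega> :: "(real ^ 'n) set" and C :: "real ^ 'n \<Rightarrow> real" and \<delta> lam :: real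
  assumes "CARD('n) \<in> {1, 2, 3}"
    and "lipschitz_domain \<Omega>"
    and "in_H1 \<Omega> C"
    and "\<delta> > 0"
    and "lam \<ge> 0"
  shows "strictly_convex_L1 \<Omega> (bbar \<Omega> C \<delta> lam)"
proof -
  have \<Omega>: "open \<Omega>" "bounded \<Omega>" "\<Omega> \<noteq> {}" using assms(2) by (auto simp: lipschitz_domain_def)
  have \<delta>: "\<delta> \<noteq> 0" using assms(4) by simp
  have Sigma: "u \<in> Sigma_set \<Omega> C \<delta>" if "bbar \<Omega> C \<delta> lam u \<noteq> \<infinity>" for u
    using that by (auto simp: bbar_def split: if_splits)
  show ?thesis unfolding strictly_convex_L1_def
  proof (intro conjI allI impI; elim conjE)
    fix u v and t :: real assume t: "0 < t" "t < 1"
    show "bbar \<Omega> C \<delta> lam (\<lambda>x. t * u x + (1 - t) * v x)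
        \<le> ereal t * bbar \<Omega> C \<delta> lam u + ereal (1 - t) * bbar \<Omega> C \<delta> lam v"
    proof (cases "bbar \<Omega> C \<delta> lam u = \<infinity> \<or> bbar \<Omega> C \<delta> lam v = \<infinity>")
      case True
      then have infinite: "ereal t * bbar \<Omega> C \<delta> lam u + ereal (1 - t) * bbar \<Omega> C \<delta> lam v = \<infinity>"
        by (rule ereal_convex_combination_eq_infinity[OF t bbar_neq_minf bbar_neq_minf])
      show ?thesis unfolding infinite by simp
    next
      case False
      then show ?thesis by (intro bbar_convex_on_Sigma_set(1)[OF \<Omega> \<delta> Sigma Sigma t]) simp_all
    qed
  next
    fix u v and t :: real
    assume "0 < t" "t < 1" "\<not> (AE x in lebesgue_on \<Omega>. u x = v x)"
      "bbar \<Omega> C \<delta> lam u < \<infinity>" "bbar \<Omega> C \<delta> lam v < \<infinity>"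
    then show "bbar \<Omega> C \<delta> lam (\<lambda>x. t * u x + (1 - t) * v x)
        < ereal t * bbar \<Omega> C \<delta> lam u + ereal (1 - t) * bbar \<Omega> C \<delta> lam v"
      by (intro bbar_convex_on_Sigma_set(2)[OF \<Omega> \<delta> Sigma Sigma]) simp_all
  qed
qed

end
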